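(* Let $\alpha,\beta$ be $H$-colorings of $G$, $q\in V(G)$, and let $Q\in\pi(H)$ be realizable for $\alpha,\beta,q$. Let $C$ be an $\alpha$-tight closed walk in $G$. Then for every vertex $v$ on $C$ and every walk $W$ in $G$ from $v$ to $q$, $Q=\overline{\alpha(W)}^{-1}\cdot\overline{\beta(W)}$.
   Context: All graphs are finite and undirected. $G$ is a connected loopless graph with at least one edge. $H$ is a connected graph with at least one edge, possibly with loops, having the monochromatic neighborhood property: for all $a,b\in V(H)$, $|N_H(a)\cap N_H(b)|\le 1$, where $N_H(a)=\{w: aw\in E(H)\}$. An $H$-coloring of $G$ is a map $\sigma:V(G)\to V(H)$ such that $uv\in E(G)$ implies $\sigma(u)\sigma(v)\in E(H)$. An $H$-recoloring sequence is a sequence $\sigma_0,\dots,\sigma_l$ of $H$-colorings of $G$ in which consecutive colorings differ in the color of exactly one vertex. Walks: an oriented edge is an ordered pair $(x,y)$ with $xy$ an edge; $(x,y)^{-1}=(y,x)$. A walk from $x$ to $y$ is a sequence of oriented edges, consecutive ones sharing endpoints, starting at $x$ and ending at $y$; $\varepsilon$ is the empty walk; $W^{-1}$ the reversed walk. A walk is reduced if no two consecutive edges $e_ie_{i+1}$ satisfy $e_{i+1}=e_i^{-1}$; $\overline{W}$ is the unique reduced walk obtained by repeatedly deleting such pairs. $A\cdot B:=\overline{AB}$ for reduced $A,B$ with $B$ starting where $A$ ends. $\pi(H)$ is the set of reduced walks in $H$. For a walk $W=(x_0,x_1)\dots(x_{k-1},x_k)$ in $G$, $\alpha(W)=(\alpha(x_0),\alpha(x_1))\dots(\alpha(x_{k-1}),\alpha(x_k))$.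 A nonempty closed walk $e_1\dots e_k$ is cyclically reduced if it is reduced and $e_k\ne e_1^{-1}$; a closed walk $C$ in $G$ is $\alpha$-tight if $\alpha(C)$ is cyclically reduced. Vertex walks: in a one-step sequence $\sigma_0,\sigma_1$ where vertex $w$ changes from $a$ to $b\ne a$, all neighbors of $w$ have a common color $h$ (the unique element of $N_H(a)\cap N_H(b)$); set $S(w)=(a,h)(h,b)$ and $S(v)=\varepsilon$ for $v\ne w$. For the empty sequence $S(v)=\varepsilon$; for longer sequences $S(v)$ is the concatenation of the one-step walks in order. $Q\in\pi(H)$ is realizable for $\alpha,\beta,q$ if there is an $H$-recoloring sequence $S=\sigma_0,\dots,\sigma_l$ with $\sigma_0=\alpha$, $\sigma_l=\beta$, $\overline{S(q)}=Q$. *)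

theory Defs
  imports Main
begin

type_synonym 'v owalk = "('v \<times> 'v) list"

fun walk :: "('v \<Rightarrow> 'v \<Rightarrow> bool) \<Rightarrow> 'v \<Rightarrow> 'v \<Rightarrow> 'v owalk \<Rightarrow> bool" where
  "walk E x y [] = (x = y)"
| "walk E x y ((u, v) # W) = (x = u \<and> E u v \<and> walk E v y W)"

definition inv_edge :: "'v \<times> 'v \<Rightarrow> 'v \<times> 'v" where
  "inv_edge e = (snd e, fst e)"

definition inv_walk :: "'v owalk \<Rightarrow> 'v owalk" where
  "inv_walk W = rev (map inv_edge W)"

fun reduced :: "'v owalk \<Rightarrow> bool" where
  "reduced (e # f # W) = (f \<noteq> inv_edge e \<and> reduced (f # W))"
| "reduced _ = True"

fun reduce :: "'v owalk \<Rightarrow> 'v owalk" where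
  "reduce [] = []"
| "reduce (e # W) = (case reduce W of
       [] \<Rightarrow> [e]
     | f # R \<Rightarrow> (if f = inv_edge e then R else e # f # R))"

definition wmult :: "'v owalk \<Rightarrow> 'v owalk \<Rightarrow> 'v owalk" (infixl "\<cdot>\<^sub>w" 70) where
  "A \<cdot>\<^sub>w B = reduce (A @ B)"

definition pi_walks :: "('v \<Rightarrow> 'v \<Rightarrow> bool) \<Rightarrow> 'v owalk set" where
  "pi_walks E = {W. reduced W \<and> (\<exists>x y. walk E x y W)}"

definition map_walk :: "('a \<Rightarrow> 'b) \<Rightarrow> 'a owalk \<Rightarrow> 'b owalk" where
  "map_walk f W = map (\<lambda>(x, y). (f x, f y)) W"

definition cyclically_reduced :: "'v owalk \<Rightarrow> bool" where
  "cyclically_reduced W \<longleftrightarrow> W \<noteq> [] \<and> reduced W \<and> last W \<noteq> inv_edge (hd W)"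

definition closed_walk :: "('v \<Rightarrow> 'v \<Rightarrow> bool) \<Rightarrow> 'v owalk \<Rightarrow> bool" where
  "closed_walk E C \<longleftrightarrow> C \<noteq> [] \<and> (\<exists>x. walk E x x C)"

definition tight :: "('a \<Rightarrow> 'b) \<Rightarrow> 'a owalk \<Rightarrow> bool" where
  "tight \<alpha> C \<longleftrightarrow> cyclically_reduced (map_walk \<alpha> C)"

definition sym_rel :: "('v \<Rightarrow> 'v \<Rightarrow> bool) \<Rightarrow> bool" where
  "sym_rel E \<longleftrightarrow> (\<forall>x y. E x y \<longrightarrow> E y x)"

definition connected_graph :: "('v \<Rightarrow> 'v \<Rightarrow> bool) \<Rightarrow> bool" where
  "connected_graph E \<longleftrightarrow> (\<forall>x y. E\<^sup>*\<^sup>* x y)"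

definition has_edge :: "('v \<Rightarrow> 'v \<Rightarrow> bool) \<Rightarrow> bool" where
  "has_edge E \<longleftrightarrow> (\<exists>x y. E x y)"

definition mono_nbhd :: "('v \<Rightarrow> 'v \<Rightarrow> bool) \<Rightarrow> bool" where
  "mono_nbhd E \<longleftrightarrow> (\<forall>a b. a \<noteq> b \<longrightarrow> card {w. E a w \<and> E b w} \<le> 1)"

definition hom_col :: "('a \<Rightarrow> 'a \<Rightarrow> bool) \<Rightarrow> ('b \<Rightarrow> 'b \<Rightarrow> bool) \<Rightarrow> ('a \<Rightarrow> 'b) \<Rightarrow> bool" where
  "hom_col EG EH \<sigma> \<longleftrightarrow> (\<forall>u v. EG u v \<longrightarrow> EH (\<sigma> u) (\<sigma> v))"

definition recolor_seq :: "('a \<Rightarrow> 'a \<Rightarrow> bool) \<Rightarrow> ('b \<Rightarrow> 'b \<Rightarrow> bool) \<Rightarrow> ('a \<Rightarrow> 'b) list \<Rightarrow> bool" where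
  "recolor_seq EG EH ss \<longleftrightarrow> ss \<noteq> [] \<and> (\<forall>\<sigma>\<in>set ss. hom_col EG EH \<sigma>)
     \<and> (\<forall>i. Suc i < length ss \<longrightarrow> card {v. (ss ! i) v \<noteq> (ss ! Suc i) v} = 1)"

definition step_walk :: "('b \<Rightarrow> 'b \<Rightarrow> bool) \<Rightarrow> ('a \<Rightarrow> 'b) \<Rightarrow> ('a \<Rightarrow> 'b) \<Rightarrow> 'a \<Rightarrow> 'b owalk" where
  "step_walk EH \<sigma> \<tau> v =
     (if \<sigma> v = \<tau> v then []
      else (let h = (THE h. EH (\<sigma> v) h \<and> EH (\<tau> v) h) in [(\<sigma> v, h), (h, \<tau> v)]))"

fun vertex_walk :: "('b \<Rightarrow> 'b \<Rightarrow> bool) \<Rightarrow> ('a \<Rightarrow> 'b) list \<Rightarrow> 'a \<Rightarrow> 'b owalk" where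
  "vertex_walk EH (\<sigma> # \<tau> # ss) v = step_walk EH \<sigma> \<tau> v @ vertex_walk EH (\<tau> # ss) v"
| "vertex_walk EH _ v = []"

definition realizable :: "('a \<Rightarrow> 'a \<Rightarrow> bool) \<Rightarrow> ('b \<Rightarrow> 'b \<Rightarrow> bool) \<Rightarrow> ('a \<Rightarrow> 'b) \<Rightarrow> ('a \<Rightarrow> 'b) \<Rightarrow> 'a \<Rightarrow> 'b owalk \<Rightarrow> bool" where
  "realizable EG EH \<alpha> \<beta> q Q \<longleftrightarrow> Q \<in> pi_walks EH \<and>
     (\<exists>ss. recolor_seq EG EH ss \<and> hd ss = \<alpha> \<and> last ss = \<beta> \<and> reduce (vertex_walk EH ss q) = Q)"

end

theory Submission
  imports Defs
begin

(* Reduced walks in H behave like the elements of a free groupoid: two walks are equivalent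
   when they have the same free reduction.  The proof of the theorem is a homotopy argument.
   (1) The free reduction is a congruence for concatenation, and inverse walks cancel.
   (2) A single recolouring step sigma -> tau of G (one vertex w changes colour, passing
       through the unique common neighbour of its old and new colour) makes the square
       "vertex walk of x, then tau(W)" equivalent to "sigma(W), then vertex walk of y" for
       every walk W from x to y; iterating along a recolouring sequence gives
       alpha(W) . S(q) ~ S(v) . beta(W).
   (3) A vertex on an alpha-tight closed walk can never be recoloured: its two neighbours on
       the walk have the same colour, which would create a backtrack in alpha(C).  Tightness
       is preserved by each step, so S(v) is empty for every vertex v of C.
   Combining (2) and (3) gives beta(W) ~ alpha(W) . S(q), and (1) turns this into the claimed
   identity Q = reduce(alpha(W))^-1 . reduce(beta(W)). *)


definition push_edge :: "'v \<times> 'v \<Rightarrow> 'v owalk \<Rightarrow> 'v owalk" where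
  "push_edge e R = (case R of [] \<Rightarrow> [e] | f # R' \<Rightarrow> (if f = inv_edge e then R' else e # f # R'))"

text \<open>The reduction is computed by pushing edges from the right; this replaces the
  recursive equation of \<open>reduce\<close> as a simplification rule.\<close>
lemma reduce_Cons: "reduce (e # W) = push_edge e (reduce W)"
  by (simp add: push_edge_def)

declare reduce.simps(2)[simp del]

lemma inv_edge_inv_edge [simp]: "inv_edge (inv_edge e) = e"
  by (simp add: inv_edge_def)

lemma reduced_tl: "reduced (f # R) \<Longrightarrow> reduced R"
  by (cases R) auto

lemma reduced_push_edge: "reduced R \<Longrightarrow> reduced (push_edge e R)"
  by (cases R) (auto simp: push_edge_def dest: reduced_tl)

lemma reduced_reduce: "reduced (reduce W)"
  by (induction W) (auto simp: reduce_Cons intro: reduced_push_edge)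

lemma reduce_reduced: "reduced W \<Longrightarrow> reduce W = W"
proof (induction W)
  case (Cons e W)
  then have "reduce W = W" using reduced_tl by blast
  then show ?case using Cons.prems by (cases W) (auto simp: push_edge_def reduce_Cons)
qed simp

lemma push_edge_cancel: "reduced R \<Longrightarrow> push_edge e (push_edge (inv_edge e) R) = R"
  by (cases R; cases "tl R") (auto simp: push_edge_def)

lemma reduce_cancel: "reduce (A @ e # inv_edge e # B) = reduce (A @ B)"
proof (induction A)
  case Nil
  show ?case
    by (simp add: reduce_Cons[of e] reduce_Cons[of "inv_edge e"] push_edge_cancel reduced_reduce)
qed (simp add: reduce_Cons)

lemma reduce_append_reduce_right: "reduce (A @ B) = reduce (A @ reduce B)"
proof (induction A)
  case Nil
  show ?case by (simp add: reduce_reduced reduced_reduce)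
qed (simp add: reduce_Cons)

lemma reduce_push_edge_append: "reduce (push_edge e R @ B) = reduce (e # R @ B)"
  using reduce_cancel[of "[]" e "tl R @ B"]
  by (cases R) (auto simp: push_edge_def inv_edge_def)

lemma reduce_append_reduce_left: "reduce (A @ B) = reduce (reduce A @ B)"
proof (induction A)
  case (Cons e A)
  have "reduce ((e # A) @ B) = push_edge e (reduce (reduce A @ B))"
    using Cons by (simp add: reduce_Cons)
  also have "\<dots> = reduce (push_edge e (reduce A) @ B)"
    by (simp add: reduce_push_edge_append reduce_Cons)
  finally show ?case by (simp add: reduce_Cons)
qed simp

lemma reduce_middle: "reduce (P @ A @ S) = reduce (P @ reduce A @ S)"
proof -
  have "reduce (P @ A @ S) = reduce (P @ reduce (A @ S))"
    by (rule reduce_append_reduce_right)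
  also have "\<dots> = reduce (P @ reduce (reduce A @ S))"
    by (simp only: reduce_append_reduce_left[of A S])
  also have "\<dots> = reduce (P @ reduce A @ S)"
    by (rule reduce_append_reduce_right[symmetric])
  finally show ?thesis .
qed

lemma reduce_cong:
  assumes "reduce A = reduce A'"
  shows "reduce (P @ A @ S) = reduce (P @ A' @ S)"
  using reduce_middle[of P A S] reduce_middle[of P A' S] assms by simp

lemma inv_walk_Cons: "inv_walk (e # A) = inv_walk A @ [inv_edge e]"
  by (simp add: inv_walk_def)

lemma reduce_inv_walk_append: "reduce (inv_walk A @ A) = []"
proof (induction A)
  case (Cons e A)
  have "reduce (inv_walk (e # A) @ e # A)
      = reduce (inv_walk A @ inv_edge e # inv_edge (inv_edge e) # A)"
    by (simp add: inv_walk_Cons)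
  also have "\<dots> = reduce (inv_walk A @ A)" by (rule reduce_cancel)
  finally show ?case using Cons by simp
qed (simp add: inv_walk_def)

lemma wmult_inv_cancel:
  assumes "reduce B = reduce (A @ S)"
  shows "inv_walk (reduce A) \<cdot>\<^sub>w reduce B = reduce S"
proof -
  let ?A' = "inv_walk (reduce A)"
  have "?A' \<cdot>\<^sub>w reduce B = reduce (?A' @ reduce (A @ S))"
    by (simp add: wmult_def assms)
  also have "\<dots> = reduce (?A' @ A @ S)"
    by (rule reduce_append_reduce_right[symmetric])
  also have "\<dots> = reduce (?A' @ reduce A @ S)"
    by (rule reduce_middle)
  also have "\<dots> = reduce S"
    using reduce_cong[of "?A' @ reduce A" "[]" "[]" S] by (simp add: reduce_inv_walk_append)
  finally show ?thesis .
qed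


lemma walk_append: "walk E x y (A @ B) \<longleftrightarrow> (\<exists>m. walk E x m A \<and> walk E m y B)"
  by (induction A arbitrary: x) auto

lemma map_walk_Cons: "map_walk f ((x, z) # W) = (f x, f z) # map_walk f W"
  by (simp add: map_walk_def)

lemma walk_snd_subset: "walk E x y W \<Longrightarrow> snd ` set W \<subseteq> fst ` set W \<union> {y}"
proof (induction W arbitrary: x)
  case (Cons e W)
  obtain u v where e: "e = (u, v)" by (cases e)
  with Cons have "walk E v y W" by auto
  moreover from this have "v \<in> fst ` set W \<union> {y}" by (cases W) auto
  ultimately show ?case using Cons.IH e by auto
qed simp

lemma closed_walk_snd_subset: "closed_walk E C \<Longrightarrow> snd ` set C \<subseteq> fst ` set C"
proof -
  assume "closed_walk E C"
  then obtain x where wk: "walk E x x C" and "C \<noteq> []" unfolding closed_walk_def by blast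
  then have "x \<in> fst ` set C" by (cases C) auto
  then show ?thesis using walk_snd_subset[OF wk] by auto
qed

lemma map_walk_closed_cong:
  assumes "closed_walk E C" and "\<And>v. v \<in> fst ` set C \<Longrightarrow> \<sigma> v = \<tau> v"
  shows "map_walk \<sigma> C = map_walk \<tau> C"
  unfolding map_walk_def
proof (rule map_cong[OF refl])
  fix e assume "e \<in> set C"
  moreover obtain a b where e: "e = (a, b)" by (cases e)
  ultimately have "a \<in> fst ` set C" and "b \<in> fst ` set C"
    using closed_walk_snd_subset[OF assms(1)] by force+
  then show "(case e of (x, y) \<Rightarrow> (\<sigma> x, \<sigma> y)) = (case e of (x, y) \<Rightarrow> (\<tau> x, \<tau> y))"
    using assms(2) e by simp
qed

lemma closed_walk_visit:
  assumes "closed_walk E C" and noloop: "\<forall>x. \<not> E x x" and "w \<in> fst ` set C"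
  obtains A B u z where "E u w" "E w z"
    "C = A @ [(u, w), (w, z)] @ B \<or> C = (w, z) # B @ [(u, w)]"
proof -
  obtain x where wk: "walk E x x C" using assms(1) unfolding closed_walk_def by blast
  obtain z where "(w, z) \<in> set C" using assms(3) by auto
  then obtain A B where C: "C = A @ (w, z) # B" by (metis split_list)
  then obtain m where wA: "walk E x m A" and "walk E m x ((w, z) # B)"
    using wk walk_append by metis
  then have "m = w" and ewz: "E w z" and wB: "walk E z x B" by auto
  show ?thesis
  proof (cases A rule: rev_cases)
    case Nil
    then have "x = w" using wA \<open>m = w\<close> by simp
    show ?thesis
    proof (cases B rule: rev_cases)
      case Nil
      then show ?thesis using wB ewz \<open>x = w\<close> noloop by auto
    next
      case (snoc B' e)
      obtain u where "e = (u, w)" and "E u w"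
        using wB snoc \<open>x = w\<close> by (cases e) (auto simp: walk_append)
      then show ?thesis using that[of u z "[]" B'] C \<open>A = []\<close> snoc ewz by simp
    qed
  next
    case (snoc A' e)
    obtain u where "e = (u, w)" and "E u w"
      using wA snoc \<open>m = w\<close> by (cases e) (auto simp: walk_append)
    then show ?thesis using that[of u z A' B] C snoc ewz by simp
  qed
qed

lemma reduced_no_backtrack: "reduced (A @ e # f # B) \<Longrightarrow> f \<noteq> inv_edge e"
  by (induction A) (auto dest: reduced_tl)


definition recolour_step ::
  "('a \<Rightarrow> 'a \<Rightarrow> bool) \<Rightarrow> ('b \<Rightarrow> 'b \<Rightarrow> bool) \<Rightarrow> ('a \<Rightarrow> 'b) \<Rightarrow> ('a \<Rightarrow> 'b) \<Rightarrow> bool" where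
  "recolour_step EG EH \<sigma> \<tau> \<longleftrightarrow>
     hom_col EG EH \<sigma> \<and> hom_col EG EH \<tau> \<and> (\<exists>w. \<forall>u. u \<noteq> w \<longrightarrow> \<sigma> u = \<tau> u)"

lemma recolour_step_fixed:
  "recolour_step EG EH \<sigma> \<tau> \<Longrightarrow> \<sigma> w \<noteq> \<tau> w \<Longrightarrow> u \<noteq> w \<Longrightarrow> \<sigma> u = \<tau> u"
  unfolding recolour_step_def by metis

lemma recolor_seq_steps:
  assumes "recolor_seq EG EH ss"
  shows "successively (recolour_step EG EH) ss"
  unfolding successively_conv_nth
proof (intro allI impI)
  fix i assume i: "Suc i < length ss"
  then have "card {v. (ss ! i) v \<noteq> (ss ! Suc i) v} = 1"
    using assms unfolding recolor_seq_def by blast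
  then obtain w where "{v. (ss ! i) v \<noteq> (ss ! Suc i) v} = {w}" by (meson card_1_singletonE)
  then show "recolour_step EG EH (ss ! i) (ss ! Suc i)"
    using assms i unfolding recolor_seq_def recolour_step_def by auto
qed

lemma common_neighbour_unique:
  fixes EH :: "'b::finite \<Rightarrow> 'b \<Rightarrow> bool"
  assumes "mono_nbhd EH" "a \<noteq> b" "EH a c" "EH b c" "EH a d" "EH b d"
  shows "c = d"
proof (rule ccontr)
  assume "c \<noteq> d"
  then have "card {c, d} = 2" by simp
  moreover have "{c, d} \<subseteq> {w. EH a w \<and> EH b w}" using assms by auto
  ultimately have "card {w. EH a w \<and> EH b w} \<ge> 2" by (metis card_mono finite)
  then show False using assms(1,2) unfolding mono_nbhd_def by fastforce
qed

text \<open>When \<open>w\<close> is recoloured, every neighbour \<open>u\<close> of \<open>w\<close> keeps its colour, which is then a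
  common neighbour of the old and new colour of \<open>w\<close>; hence the vertex walk of \<open>w\<close> passes
  through the colour of \<open>u\<close>.\<close>
lemma step_walk_via_neighbour:
  fixes EH :: "'b::finite \<Rightarrow> 'b \<Rightarrow> bool"
  assumes mono: "mono_nbhd EH" and step: "recolour_step EG EH \<sigma> \<tau>"
    and noloop: "\<forall>x. \<not> EG x x" and edge: "EG w u" and changed: "\<sigma> w \<noteq> \<tau> w"
  shows "\<sigma> u = \<tau> u" and "step_walk EH \<sigma> \<tau> w = [(\<sigma> w, \<sigma> u), (\<sigma> u, \<tau> w)]"
proof -
  show fixed: "\<sigma> u = \<tau> u"
    using recolour_step_fixed[OF step changed] edge noloop by metis
  have "EH (\<sigma> w) (\<sigma> u)" "EH (\<tau> w) (\<sigma> u)"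
    using step edge fixed unfolding recolour_step_def hom_col_def by metis+
  then have "(THE h. EH (\<sigma> w) h \<and> EH (\<tau> w) h) = \<sigma> u"
    using common_neighbour_unique[OF mono changed] by (intro the_equality) auto
  then show "step_walk EH \<sigma> \<tau> w = [(\<sigma> w, \<sigma> u), (\<sigma> u, \<tau> w)]"
    using changed by (simp add: step_walk_def Let_def)
qed


subsection \<open>Recolouring is a homotopy\<close>

lemma step_square_edge:
  fixes EH :: "'b::finite \<Rightarrow> 'b \<Rightarrow> bool"
  assumes symG: "sym_rel EG" and noloop: "\<forall>x. \<not> EG x x" and mono: "mono_nbhd EH"
    and step: "recolour_step EG EH \<sigma> \<tau>" and e: "EG x z"
  shows "reduce (step_walk EH \<sigma> \<tau> x @ (\<tau> x, \<tau> z) # T)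
       = reduce ((\<sigma> x, \<sigma> z) # step_walk EH \<sigma> \<tau> z @ T)"
proof (cases "\<sigma> x = \<tau> x")
  case x_fixed: True
  show ?thesis
  proof (cases "\<sigma> z = \<tau> z")
    case True
    then show ?thesis using x_fixed by (simp add: step_walk_def)
  next
    case False
    have "EG z x" using symG e unfolding sym_rel_def by blast
    then have "step_walk EH \<sigma> \<tau> z = [(\<sigma> z, \<sigma> x), (\<sigma> x, \<tau> z)]"
      by (rule step_walk_via_neighbour(2)[OF mono step noloop _ False])
    then show ?thesis
      using x_fixed reduce_cancel[of "[]" "(\<sigma> x, \<sigma> z)" "(\<sigma> x, \<tau> z) # T"]
      by (simp add: step_walk_def inv_edge_def)
  qed
next
  case False
  then have "\<sigma> z = \<tau> z" and "step_walk EH \<sigma> \<tau> x = [(\<sigma> x, \<sigma> z), (\<sigma> z, \<tau> x)]"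
    using step_walk_via_neighbour[OF mono step noloop e False] by simp_all
  then show ?thesis
    using reduce_cancel[of "[(\<sigma> x, \<sigma> z)]" "(\<sigma> z, \<tau> x)" T]
    by (simp add: step_walk_def inv_edge_def)
qed

lemma step_square:
  fixes EH :: "'b::finite \<Rightarrow> 'b \<Rightarrow> bool"
  assumes symG: "sym_rel EG" and noloop: "\<forall>x. \<not> EG x x" and mono: "mono_nbhd EH"
    and step: "recolour_step EG EH \<sigma> \<tau>" and "walk EG x y W"
  shows "reduce (step_walk EH \<sigma> \<tau> x @ map_walk \<tau> W)
       = reduce (map_walk \<sigma> W @ step_walk EH \<sigma> \<tau> y)"
  using \<open>walk EG x y W\<close>
proof (induction W arbitrary: x)
  case Nil then show ?case by (simp add: map_walk_def)
next
  case (Cons e W)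
  obtain z where e: "e = (x, z)" and "EG x z" and "walk EG z y W"
    using Cons.prems by (cases e) auto
  have "reduce (step_walk EH \<sigma> \<tau> x @ map_walk \<tau> (e # W))
      = reduce ((\<sigma> x, \<sigma> z) # step_walk EH \<sigma> \<tau> z @ map_walk \<tau> W)"
    using step_square_edge[OF symG noloop mono step \<open>EG x z\<close>] by (simp add: e map_walk_Cons)
  also have "\<dots> = reduce ((\<sigma> x, \<sigma> z) # map_walk \<sigma> W @ step_walk EH \<sigma> \<tau> y)"
    using reduce_cong[OF Cons.IH[OF \<open>walk EG z y W\<close>], of "[(\<sigma> x, \<sigma> z)]" "[]"] by simp
  finally show ?case by (simp add: e map_walk_Cons)
qed

lemma vertex_walk_square:
  fixes EH :: "'b::finite \<Rightarrow> 'b \<Rightarrow> bool"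
  assumes symG: "sym_rel EG" and noloop: "\<forall>x. \<not> EG x x" and mono: "mono_nbhd EH"
    and "successively (recolour_step EG EH) ss" and "ss \<noteq> []" and "walk EG x y W"
  shows "reduce (vertex_walk EH ss x @ map_walk (last ss) W)
       = reduce (map_walk (hd ss) W @ vertex_walk EH ss y)"
  using assms(4,5)
proof (induction "recolour_step EG EH" ss rule: successively.induct)
  case (3 \<sigma> \<tau> ss)
  let ?s = "step_walk EH \<sigma> \<tau>" and ?V = "vertex_walk EH (\<tau> # ss)"
  have IH: "reduce (?V x @ map_walk (last (\<tau> # ss)) W) = reduce (map_walk \<tau> W @ ?V y)"
    using 3 by simp
  have square: "reduce (?s x @ map_walk \<tau> W) = reduce (map_walk \<sigma> W @ ?s y)"
    using step_square[OF symG noloop mono _ \<open>walk EG x y W\<close>] "3.prems" by simp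
  have "reduce (?s x @ ?V x @ map_walk (last (\<tau> # ss)) W)
      = reduce (?s x @ map_walk \<tau> W @ ?V y)"
    using reduce_cong[OF IH, of "?s x" "[]"] by simp
  also have "\<dots> = reduce (map_walk \<sigma> W @ ?s y @ ?V y)"
    using reduce_cong[OF square, of "[]" "?V y"] by simp
  finally show ?case by simp
qed (simp_all add: map_walk_def)


subsection \<open>Tight closed walks are frozen\<close>

text \<open>A single step cannot recolour a vertex of a \<open>\<sigma>\<close>-tight closed walk: its predecessor and
  successor on the walk would have the same colour, giving a backtrack in \<open>\<sigma>(C)\<close>.\<close>
lemma tight_vertex_fixed:
  fixes EH :: "'b::finite \<Rightarrow> 'b \<Rightarrow> bool"
  assumes symG: "sym_rel EG" and noloop: "\<forall>x. \<not> EG x x" and mono: "mono_nbhd EH"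
    and step: "recolour_step EG EH \<sigma> \<tau>" and closed: "closed_walk EG C"
    and tight: "tight \<sigma> C" and v: "v \<in> fst ` set C"
  shows "\<sigma> v = \<tau> v"
proof (rule ccontr)
  assume changed: "\<sigma> v \<noteq> \<tau> v"
  obtain A B u z where "EG u v" "EG v z"
    and C: "C = A @ [(u, v), (v, z)] @ B \<or> C = (v, z) # B @ [(u, v)]"
    by (rule closed_walk_visit[OF closed noloop v])
  have "EG v u" using \<open>EG u v\<close> symG unfolding sym_rel_def by blast
  have "step_walk EH \<sigma> \<tau> v = [(\<sigma> v, \<sigma> u), (\<sigma> u, \<tau> v)]"
    and "step_walk EH \<sigma> \<tau> v = [(\<sigma> v, \<sigma> z), (\<sigma> z, \<tau> v)]"
    using step_walk_via_neighbour(2)[OF mono step noloop \<open>EG v u\<close> changed]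
      step_walk_via_neighbour(2)[OF mono step noloop \<open>EG v z\<close> changed] by simp_all
  then have backtrack: "(\<sigma> v, \<sigma> z) = inv_edge (\<sigma> u, \<sigma> v)" by (simp add: inv_edge_def)
  have cr: "cyclically_reduced (map_walk \<sigma> C)" using tight unfolding tight_def .
  from C show False
  proof
    assume "C = A @ [(u, v), (v, z)] @ B"
    then have "map_walk \<sigma> C = map_walk \<sigma> A @ (\<sigma> u, \<sigma> v) # (\<sigma> v, \<sigma> z) # map_walk \<sigma> B"
      by (simp add: map_walk_def)
    then have "reduced (map_walk \<sigma> A @ (\<sigma> u, \<sigma> v) # (\<sigma> v, \<sigma> z) # map_walk \<sigma> B)"
      using cr by (simp add: cyclically_reduced_def)
    then show False using backtrack reduced_no_backtrack by blast
  next
    assume "C = (v, z) # B @ [(u, v)]"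
    then show False
      using cr backtrack by (simp add: cyclically_reduced_def map_walk_def inv_edge_def)
  qed
qed

text \<open>Consequently no vertex of an \<open>\<alpha>\<close>-tight closed walk moves during a recolouring sequence
  starting at \<open>\<alpha>\<close>: tightness passes to each subsequent colouring.\<close>
lemma tight_vertex_walk_empty:
  fixes EH :: "'b::finite \<Rightarrow> 'b \<Rightarrow> bool"
  assumes symG: "sym_rel EG" and noloop: "\<forall>x. \<not> EG x x" and mono: "mono_nbhd EH"
    and closed: "closed_walk EG C" and v: "v \<in> fst ` set C"
  shows "successively (recolour_step EG EH) ss \<Longrightarrow> tight (hd ss) C \<Longrightarrow>
    vertex_walk EH ss v = []"
proof (induction "recolour_step EG EH" ss rule: successively.induct)
  case (3 \<sigma> \<tau> ss)
  have fixed: "\<And>u. u \<in> fst ` set C \<Longrightarrow> \<sigma> u = \<tau> u"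
    using tight_vertex_fixed[OF symG noloop mono _ closed] "3.prems" by simp
  then have "tight \<tau> C"
    using "3.prems" map_walk_closed_cong[OF closed fixed] unfolding tight_def by simp
  then show ?case using 3 fixed[OF v] by (simp add: step_walk_def)
qed simp_all


theorem mainTheorem5:
  fixes EG :: "'a::finite \<Rightarrow> 'a \<Rightarrow> bool" and EH :: "'b::finite \<Rightarrow> 'b \<Rightarrow> bool"
    and \<alpha> \<beta> :: "'a \<Rightarrow> 'b" and q :: 'a and Q :: "'b owalk" and C :: "'a owalk"
  assumes "sym_rel EG" and "\<forall>x. \<not> EG x x" and "connected_graph EG" and "has_edge EG"
    and "sym_rel EH" and "connected_graph EH" and "has_edge EH" and "mono_nbhd EH"
    and "hom_col EG EH \<alpha>" and "hom_col EG EH \<beta>"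
    and "realizable EG EH \<alpha> \<beta> q Q"
    and "closed_walk EG C" and "tight \<alpha> C"
  shows "\<forall>v W. v \<in> fst ` set C \<longrightarrow> walk EG v q W \<longrightarrow>
           Q = inv_walk (reduce (map_walk \<alpha> W)) \<cdot>\<^sub>w reduce (map_walk \<beta> W)"
proof (intro allI impI)
  fix v W assume v: "v \<in> fst ` set C" and W: "walk EG v q W"
  obtain ss where seq: "recolor_seq EG EH ss" and "hd ss = \<alpha>" "last ss = \<beta>"
    and Q: "reduce (vertex_walk EH ss q) = Q"
    using assms(11) unfolding realizable_def by blast
  have steps: "successively (recolour_step EG EH) ss" and "ss \<noteq> []"
    using recolor_seq_steps[OF seq] seq unfolding recolor_seq_def by blast+
  have "vertex_walk EH ss v = []"
    using tight_vertex_walk_empty[OF assms(1,2,8,12) v steps] \<open>hd ss = \<alpha>\<close> assms(13) by simp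
  then have "reduce (map_walk \<beta> W) = reduce (map_walk \<alpha> W @ vertex_walk EH ss q)"
    using vertex_walk_square[OF assms(1,2,8) steps \<open>ss \<noteq> []\<close> W] \<open>hd ss = \<alpha>\<close> \<open>last ss = \<beta>\<close>
    by simp
  then show "Q = inv_walk (reduce (map_walk \<alpha> W)) \<cdot>\<^sub>w reduce (map_walk \<beta> W)"
    using wmult_inv_cancel Q by metis
qed

end
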